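(* Suppose the block size $B$ is finite. Then the only (possibly randomized) TFM $(\mathbf x,\mathbf p,\mu)$ satisfying both UIC and $1$-SCP is the trivial mechanism that never confirms any transaction (i.e. $x_i(\mathbf b)=0$ for all bid vectors $\mathbf b$ and all $i$) and always pays the miner nothing.
   Context: Setting (transaction fee mechanism, TFM). Each user $i$ has a private true value $v_i\ge 0$ for having its transaction confirmed in the next block and submits a single bid $b_i\ge 0$; a bid vector is $\mathbf b=(b_1,\dots,b_m)$. A block contains at most $B$ transactions. A TFM consists of an inclusion rule (run by the miner) selecting at most $B$ bids to include in the block, and a confirmation rule, payment rule and miner-revenue rule (run by the blockchain, using only the included bids) deciding which included bids are confirmed, what each confirmed bid pays (at most its bid; unconfirmed bids pay $0$), and what the miner receives (at most the total payment of confirmed bids; the remainder is burnt). Rules may be randomized; the mechanism treats users symmetrically (swapping two users' bids swaps their outcomes). Composing the honest inclusion rule with the other rules gives $(\mathbf x,\mathbf p,\mu)$: $x_i(\mathbf b)\in[0,1]$ is the probability user $i$ is confirmed, $p_i(\mathbf b)$ its expected payment, $\mu(\mathbf b)$ the miner's expected revenue. Strategic behavior: a strategic player is a single user, the miner, or a coalition of the miner with some users; it may have its users bid untruthfully after seeing all other bids, inject fake bids (true value $0$), and, if it contains the miner, include any set of at most $B$ available bids instead of following the inclusion rule. Ordinary utility: miner's revenue (if the miner belongs to the player) plus $v-p$ for each confirmed transaction of the player with true value $v$ and payment $p$. UIC: assuming the miner follows the mechanism, each user's expected utility is maximized by bidding truthfully, whatever the other bids. $1$-SCP: for every coalition of the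 miner and one user, expected joint utility is maximized when the user bids truthfully and the miner follows the mechanism, whatever the other bids. *)

theory Defs
  imports "HOL-Probability.Probability_Mass_Function"
begin

text \<open>
A TFM is given by four components:
  inc  :: real list => nat set pmf      (randomized inclusion rule, run by the miner; it
                                          returns the set of indices of the included bids)
  conf :: real list => nat => real      (confirmation rule: probability that the k-th included
                                          bid is confirmed, given the list of included bids)
  pay  :: real list => nat => real      (payment rule: expected payment of the k-th included bid)
  mrev :: real list => real             (miner-revenue rule: expected miner revenue)
The blockchain rules only see the list of included bids (in index order).
Users are identified with positions in the bid vector.
\<close>

definition nonneg_bids :: "real list \<Rightarrow> bool" where
  "nonneg_bids b \<longleftrightarrow> (\<forall>y\<in>set b. 0 \<le> y)"

definition incl :: "real list \<Rightarrow> nat set \<Rightarrow> real list" where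
  "incl b S = map (\<lambda>k. b ! k) (sorted_list_of_set S)"

definition pos :: "nat set \<Rightarrow> nat \<Rightarrow> nat" where
  "pos S k = card {j\<in>S. j < k}"

definition tr :: "nat \<Rightarrow> nat \<Rightarrow> nat \<Rightarrow> nat" where
  "tr i j k = (if k = i then j else if k = j then i else k)"

definition swap_bids :: "nat \<Rightarrow> nat \<Rightarrow> real list \<Rightarrow> real list" where
  "swap_bids i j b = b[i := b ! j, j := b ! i]"

definition conf_at :: "(real list \<Rightarrow> nat \<Rightarrow> real) \<Rightarrow> real list \<Rightarrow> nat set \<Rightarrow> nat \<Rightarrow> real" where
  "conf_at conf b S k = (if k \<in> S then conf (incl b S) (pos S k) else 0)"

definition pay_at :: "(real list \<Rightarrow> nat \<Rightarrow> real) \<Rightarrow> real list \<Rightarrow> nat set \<Rightarrow> nat \<Rightarrow> real" where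
  "pay_at pay b S k = (if k \<in> S then pay (incl b S) (pos S k) else 0)"

definition rev_at :: "(real list \<Rightarrow> real) \<Rightarrow> real list \<Rightarrow> nat set \<Rightarrow> real" where
  "rev_at mrev b S = mrev (incl b S)"

definition xx :: "(real list \<Rightarrow> nat set pmf) \<Rightarrow> (real list \<Rightarrow> nat \<Rightarrow> real) \<Rightarrow> real list \<Rightarrow> nat \<Rightarrow> real" where
  "xx inc conf b k = measure_pmf.expectation (inc b) (\<lambda>S. conf_at conf b S k)"

definition pp :: "(real list \<Rightarrow> nat set pmf) \<Rightarrow> (real list \<Rightarrow> nat \<Rightarrow> real) \<Rightarrow> real list \<Rightarrow> nat \<Rightarrow> real" where
  "pp inc pay b k = measure_pmf.expectation (inc b) (\<lambda>S. pay_at pay b S k)"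

definition mu :: "(real list \<Rightarrow> nat set pmf) \<Rightarrow> (real list \<Rightarrow> real) \<Rightarrow> real list \<Rightarrow> real" where
  "mu inc mrev b = measure_pmf.expectation (inc b) (\<lambda>S. rev_at mrev b S)"

definition valid_tfm :: "nat \<Rightarrow> (real list \<Rightarrow> nat set pmf) \<Rightarrow> (real list \<Rightarrow> nat \<Rightarrow> real)
    \<Rightarrow> (real list \<Rightarrow> nat \<Rightarrow> real) \<Rightarrow> (real list \<Rightarrow> real) \<Rightarrow> bool" where
  "valid_tfm B inc conf pay mrev \<longleftrightarrow>
     \<comment> \<open>inclusion rule selects at most B of the available bids\<close>
     (\<forall>b. nonneg_bids b \<longrightarrow> (\<forall>S\<in>set_pmf (inc b). S \<subseteq> {..<length b} \<and> card S \<le> B)) \<and>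
     \<comment> \<open>confirmation / payment / miner revenue constraints on included bids\<close>
     (\<forall>c. nonneg_bids c \<longrightarrow> length c \<le> B \<longrightarrow>
        (\<forall>k<length c. 0 \<le> conf c k \<and> conf c k \<le> 1 \<and>
                        0 \<le> pay c k \<and> pay c k \<le> c ! k * conf c k) \<and>
        0 \<le> mrev c \<and> mrev c \<le> (\<Sum>k<length c. pay c k)) \<and>
     \<comment> \<open>symmetry of the blockchain rules\<close>
     (\<forall>c i j. nonneg_bids c \<longrightarrow> length c \<le> B \<longrightarrow> i < length c \<longrightarrow> j < length c \<longrightarrow>
        (\<forall>k<length c. conf (swap_bids i j c) k = conf c (tr i j k) \<and>
                        pay (swap_bids i j c) k = pay c (tr i j k)) \<and>
        mrev (swap_bids i j c) = mrev c) \<and>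
     \<comment> \<open>symmetry of the composed honest mechanism\<close>
     (\<forall>b i j. nonneg_bids b \<longrightarrow> i < length b \<longrightarrow> j < length b \<longrightarrow>
        (\<forall>k<length b. xx inc conf (swap_bids i j b) k = xx inc conf b (tr i j k) \<and>
                        pp inc pay (swap_bids i j b) k = pp inc pay b (tr i j k)) \<and>
        mu inc mrev (swap_bids i j b) = mu inc mrev b)"

text \<open>UIC: user i (true value b!i) cannot gain, with the miner honest, by changing its bid
  to b' and injecting fake bids f (true value 0), whatever the other bids.\<close>
definition UIC :: "(real list \<Rightarrow> nat set pmf) \<Rightarrow> (real list \<Rightarrow> nat \<Rightarrow> real)
    \<Rightarrow> (real list \<Rightarrow> nat \<Rightarrow> real) \<Rightarrow> bool" where
  "UIC inc conf pay \<longleftrightarrow>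
     (\<forall>b i b' f. nonneg_bids b \<longrightarrow> i < length b \<longrightarrow> 0 \<le> b' \<longrightarrow> nonneg_bids f \<longrightarrow>
        (let b2 = b[i := b'] @ f in
          xx inc conf b2 i * (b ! i) - pp inc pay b2 i
            - (\<Sum>j\<in>{length b..<length b2}. pp inc pay b2 j)
          \<le> xx inc conf b i * (b ! i) - pp inc pay b i))"

definition SCP1 :: "nat \<Rightarrow> (real list \<Rightarrow> nat set pmf) \<Rightarrow> (real list \<Rightarrow> nat \<Rightarrow> real)
    \<Rightarrow> (real list \<Rightarrow> nat \<Rightarrow> real) \<Rightarrow> (real list \<Rightarrow> real) \<Rightarrow> bool" where
  "SCP1 B inc conf pay mrev \<longleftrightarrow>
     (\<forall>b i b' f S. nonneg_bids b \<longrightarrow> i < length b \<longrightarrow> 0 \<le> b' \<longrightarrow> nonneg_bids f \<longrightarrow>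
        (let b2 = b[i := b'] @ f in
          S \<subseteq> {..<length b2} \<longrightarrow> card S \<le> B \<longrightarrow>
          rev_at mrev b2 S + conf_at conf b2 S i * (b ! i) - pay_at pay b2 S i
            - (\<Sum>j\<in>{length b..<length b2}. pay_at pay b2 S j)
          \<le> mu inc mrev b + xx inc conf b i * (b ! i) - pp inc pay b i))"

end

theory Submission
  imports Defs
begin

text \<open>
Let user i move its bid from y to z. UIC for the user with value z, and 1-SCP for the coalition
of the miner with the user of value y (who bids z, the miner including honestly), add up to
  mu(b[i:=z]) - mu(b[i:=y]) \<le> (x_i(b[i:=y]) - x_i(b[i:=z])) (y - z).
Along a partition of [0, b_i] of mesh h the changes of mu are thus bounded by h times the
increments of x_i, which is monotone with values in [0,1]. Hence mu does not depend on any single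
bid, and mu = 0 because the miner earns nothing when all bids are 0.

For an includable list c, let user k have value V \<ge> c_k + 1 and add n - 1 further bids V.
Symmetry spreads the at most B expected confirmations evenly over the n equal bids, so honestly
the coalition of the miner and user k gets at most mu + V B/n = V B/n. Deviating, the user bids
c_k and the miner includes exactly c, which yields at least conf(c)_k (V - c_k) \<ge> conf(c)_k.
Letting n grow forces conf(c)_k = 0, and therefore x = 0.
\<close>

lemma pos_less_card: "finite S \<Longrightarrow> k \<in> S \<Longrightarrow> pos S k < card S"
  unfolding pos_def by (intro psubset_card_mono) auto

lemma pos_lessThan: "k < L \<Longrightarrow> pos {..<L} k = k"
  unfolding pos_def by (simp add: Collect_conj_eq lessThan_def[symmetric] Int_absorb1)

lemma length_incl [simp]: "length (incl b S) = card S"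
  by (simp add: incl_def)

lemma set_incl_subset: "S \<subseteq> {..<length b} \<Longrightarrow> set (incl b S) \<subseteq> set b"
  using finite_subset[of S "{..<length b}"] by (auto simp: incl_def)

lemma incl_prefix: "incl (c @ d) {..<length c} = c"
  unfolding incl_def lessThan_atLeast0 by (rule nth_equalityI) (auto simp: nth_append)

lemma nonneg_bids_Nil [simp]: "nonneg_bids []"
  by (simp add: nonneg_bids_def)

lemma nonneg_bids_incl: "nonneg_bids b \<Longrightarrow> S \<subseteq> {..<length b} \<Longrightarrow> nonneg_bids (incl b S)"
  using set_incl_subset unfolding nonneg_bids_def by blast

lemma nonneg_bids_list_update: "nonneg_bids b \<Longrightarrow> 0 \<le> t \<Longrightarrow> nonneg_bids (b[i := t])"
  unfolding nonneg_bids_def using set_update_subset_insert by fastforce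

lemma expectation_mono_pmf:
  fixes f g :: "'a \<Rightarrow> real"
  assumes "finite (set_pmf p)" "\<And>x. x \<in> set_pmf p \<Longrightarrow> f x \<le> g x"
  shows "measure_pmf.expectation p f \<le> measure_pmf.expectation p g"
  using assms by (intro integral_mono_AE integrable_measure_pmf_finite) (auto simp: AE_measure_pmf_iff)

lemma expectation_pmf_eq_0:
  fixes f :: "'a \<Rightarrow> real"
  assumes "\<And>x. x \<in> set_pmf p \<Longrightarrow> f x = 0"
  shows "measure_pmf.expectation p f = 0"
  using integral_measure_pmf_real[of "{}" p f] assms by auto

lemma nonpos_if_le_div_nat:
  fixes x C :: real
  assumes "\<And>n::nat. 0 < n \<Longrightarrow> x \<le> C / real n"
  shows "x \<le> 0"
proof (rule ccontr)
  assume "\<not> x \<le> 0"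
  then obtain n :: nat where "C / x < real n" using reals_Archimedean2 by blast
  then have "C < x * real (Suc n)" using \<open>\<not> x \<le> 0\<close> by (simp add: field_simps)
  then show False using assms[of "Suc n"] by (simp add: field_simps)
qed

lemma endpoints_eq_if_abs_diff_le_increment:
  fixes m X :: "real \<Rightarrow> real"
  assumes "a \<le> b"
    and diff: "\<And>s t. s \<in> {a..b} \<Longrightarrow> t \<in> {a..b} \<Longrightarrow> \<bar>m t - m s\<bar> \<le> (X t - X s) * (t - s)"
    and bounded: "\<And>t. t \<in> {a..b} \<Longrightarrow> L \<le> X t \<and> X t \<le> U"
  shows "m b = m a"
proof -
  have "\<bar>m b - m a\<bar> \<le> (U - L) * (b - a) / real n" if "0 < n" for n :: nat
  proof -
    define h where "h = (b - a) / real n"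
    define g where "g k = a + real k * h" for k :: nat
    have h: "0 \<le> h" "real n * h = b - a" unfolding h_def using \<open>a \<le> b\<close> \<open>0 < n\<close> by auto
    have g: "g k \<in> {a..b}" if "k \<le> n" for k
    proof -
      have "real k * h \<le> real n * h" using that h(1) by (intro mult_right_mono) auto
      then show ?thesis unfolding g_def using h by auto
    qed
    have "\<bar>m (g n) - m (g 0)\<bar> = \<bar>\<Sum>k<n. m (g (Suc k)) - m (g k)\<bar>"
      using sum_lessThan_telescope[of "\<lambda>k. m (g k)" n] by simp
    also have "\<dots> \<le> (\<Sum>k<n. \<bar>m (g (Suc k)) - m (g k)\<bar>)" by (rule sum_abs)
    also have "\<dots> \<le> (\<Sum>k<n. (X (g (Suc k)) - X (g k)) * h)"
    proof (rule sum_mono)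
      fix k assume "k \<in> {..<n}"
      then show "\<bar>m (g (Suc k)) - m (g k)\<bar> \<le> (X (g (Suc k)) - X (g k)) * h"
        using diff[OF g g, of k "Suc k"] by (simp add: g_def algebra_simps)
    qed
    also have "\<dots> = (X (g n) - X (g 0)) * h"
      using sum_lessThan_telescope[of "\<lambda>k. X (g k)" n] by (simp add: sum_distrib_right[symmetric])
    also have "\<dots> \<le> (U - L) * h"
      using bounded[OF g] h(1) by (intro mult_right_mono) (metis diff_mono le0 order_refl)
    finally show ?thesis using h by (simp add: g_def h_def)
  qed
  then have "\<bar>m b - m a\<bar> \<le> 0" by (rule nonpos_if_le_div_nat)
  then show ?thesis by simp
qed

locale tfm =
  fixes B :: nat
    and inc :: "real list \<Rightarrow> nat set pmf"
    and conf pay :: "real list \<Rightarrow> nat \<Rightarrow> real"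
    and mrev :: "real list \<Rightarrow> real"
  assumes valid: "valid_tfm B inc conf pay mrev"
begin

lemma inc_support:
  "nonneg_bids b \<Longrightarrow> S \<in> set_pmf (inc b) \<Longrightarrow> S \<subseteq> {..<length b} \<and> card S \<le> B"
  using valid[unfolded valid_tfm_def, THEN conjunct1] by blast

lemma finite_set_pmf_inc:
  assumes "nonneg_bids b"
  shows "finite (set_pmf (inc b))"
proof (rule finite_subset)
  show "set_pmf (inc b) \<subseteq> Pow {..<length b}" using inc_support[OF assms] by blast
qed simp

lemma conf_pay_bounds:
  "nonneg_bids c \<Longrightarrow> length c \<le> B \<Longrightarrow> k < length c \<Longrightarrow>
     0 \<le> conf c k \<and> conf c k \<le> 1 \<and> 0 \<le> pay c k \<and> pay c k \<le> c ! k * conf c k"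
  using valid[unfolded valid_tfm_def, THEN conjunct2, THEN conjunct1] by blast

lemma mrev_bounds:
  "nonneg_bids c \<Longrightarrow> length c \<le> B \<Longrightarrow> 0 \<le> mrev c \<and> mrev c \<le> (\<Sum>k<length c. pay c k)"
  using valid[unfolded valid_tfm_def, THEN conjunct2, THEN conjunct1] by blast

lemma xx_swap_bids:
  "nonneg_bids b \<Longrightarrow> i < length b \<Longrightarrow> j < length b \<Longrightarrow> k < length b \<Longrightarrow>
     xx inc conf (swap_bids i j b) k = xx inc conf b (tr i j k)"
  using valid[unfolded valid_tfm_def, THEN conjunct2, THEN conjunct2, THEN conjunct2] by blast

lemma conf_at_pay_at_bounds:
  assumes "nonneg_bids b" "S \<in> set_pmf (inc b)"
  shows "0 \<le> conf_at conf b S k" "conf_at conf b S k \<le> 1" "0 \<le> pay_at pay b S k"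
proof -
  have S: "S \<subseteq> {..<length b}" "card S \<le> B" using inc_support[OF assms] by auto
  have "finite S" by (rule finite_subset[OF S(1)]) simp
  then have "0 \<le> conf (incl b S) (pos S k) \<and> conf (incl b S) (pos S k) \<le> 1 \<and>
      0 \<le> pay (incl b S) (pos S k)" if "k \<in> S"
    using conf_pay_bounds[OF nonneg_bids_incl[OF assms(1) S(1)]] S(2) pos_less_card that by simp
  then show "0 \<le> conf_at conf b S k" "conf_at conf b S k \<le> 1" "0 \<le> pay_at pay b S k"
    by (auto simp: conf_at_def pay_at_def)
qed

lemma xx_bounds: "nonneg_bids b \<Longrightarrow> 0 \<le> xx inc conf b k \<and> xx inc conf b k \<le> 1"
  using expectation_mono_pmf[OF finite_set_pmf_inc, of b "\<lambda>_. 0" "\<lambda>S. conf_at conf b S k"]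
    expectation_mono_pmf[OF finite_set_pmf_inc, of b "\<lambda>S. conf_at conf b S k" "\<lambda>_. 1"]
  by (simp add: xx_def conf_at_pay_at_bounds)

lemma pp_nonneg: "nonneg_bids b \<Longrightarrow> 0 \<le> pp inc pay b k"
  using expectation_mono_pmf[OF finite_set_pmf_inc, of b "\<lambda>_. 0" "\<lambda>S. pay_at pay b S k"]
  by (simp add: pp_def conf_at_pay_at_bounds)

lemma sum_conf_at_le:
  assumes "nonneg_bids b" "S \<in> set_pmf (inc b)"
  shows "(\<Sum>j<length b. conf_at conf b S j) \<le> real B"
proof -
  have S: "S \<subseteq> {..<length b}" "card S \<le> B" using inc_support[OF assms] by auto
  have "conf_at conf b S j \<le> (if j \<in> S then 1 else 0)" for j
    using conf_at_pay_at_bounds(2)[OF assms, of j] by (simp add: conf_at_def split: if_splits)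
  then have "(\<Sum>j<length b. conf_at conf b S j) \<le> (\<Sum>j<length b. if j \<in> S then 1 else 0)"
    by (intro sum_mono)
  also have "\<dots> = real (card S)" using S(1) by (simp add: sum.If_cases Int_absorb1)
  finally show ?thesis using S(2) by simp
qed

lemma sum_xx_le: "nonneg_bids b \<Longrightarrow> (\<Sum>j<length b. xx inc conf b j) \<le> real B"
  using expectation_mono_pmf[OF finite_set_pmf_inc,
      of b "\<lambda>S. \<Sum>j<length b. conf_at conf b S j" "\<lambda>_. real B"]
  by (simp add: xx_def sum_conf_at_le integrable_measure_pmf_finite finite_set_pmf_inc)

lemma xx_eq_if_bids_eq:
  assumes "nonneg_bids b" "i < length b" "j < length b" "b ! i = b ! j"
  shows "xx inc conf b i = xx inc conf b j"
proof -
  have "swap_bids i j b = b" unfolding swap_bids_def by (metis assms(4) list_update_id)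
  then show ?thesis using xx_swap_bids[OF assms(1-3,2)] by (simp add: tr_def)
qed

lemma card_mult_xx_le:
  assumes "nonneg_bids b" "J \<subseteq> {..<length b}" "k \<in> J" "\<And>j. j \<in> J \<Longrightarrow> b ! j = b ! k"
  shows "real (card J) * xx inc conf b k \<le> real B"
proof -
  have "xx inc conf b j = xx inc conf b k" if "j \<in> J" for j
    using xx_eq_if_bids_eq[OF assms(1), of j k] assms(2-4) that by blast
  then have "real (card J) * xx inc conf b k = (\<Sum>j\<in>J. xx inc conf b j)" by simp
  also have "\<dots> \<le> (\<Sum>j<length b. xx inc conf b j)"
    using xx_bounds[OF assms(1)] by (intro sum_mono2[OF _ assms(2)]) auto
  also have "\<dots> \<le> real B" using sum_xx_le[OF assms(1)] .
  finally show ?thesis .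
qed

lemma mu_eq_0_if_bids_zero:
  assumes "nonneg_bids b" "\<And>y. y \<in> set b \<Longrightarrow> y = 0"
  shows "mu inc mrev b = 0"
  unfolding mu_def
proof (rule expectation_pmf_eq_0)
  fix S assume "S \<in> set_pmf (inc b)"
  then have S: "S \<subseteq> {..<length b}" "card S \<le> B" using inc_support[OF assms(1)] by auto
  let ?c = "incl b S"
  have c: "nonneg_bids ?c" "length ?c \<le> B" using nonneg_bids_incl assms(1) S by auto
  have "pay ?c k \<le> 0" if "k < length ?c" for k
  proof -
    have "?c ! k = 0" using nth_mem[OF that] set_incl_subset[OF S(1)] assms(2) by blast
    then show ?thesis using conf_pay_bounds[OF c that] by simp
  qed
  then have "(\<Sum>k<length ?c. pay ?c k) \<le> 0" by (intro sum_nonpos) simp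
  then have "mrev ?c \<le> 0" using mrev_bounds[OF c] by linarith
  then show "rev_at mrev b S = 0" using mrev_bounds[OF c] by (simp add: rev_at_def)
qed

end

locale tfm_uic_scp = tfm +
  assumes uic: "UIC inc conf pay"
    and scp: "SCP1 B inc conf pay mrev"
begin

lemma uic_no_fakes:
  assumes "nonneg_bids b" "i < length b" "0 \<le> b'"
  shows "xx inc conf (b[i := b']) i * b ! i - pp inc pay (b[i := b']) i
           \<le> xx inc conf b i * b ! i - pp inc pay b i"
  using uic[unfolded UIC_def Let_def, rule_format, of b i b' "[]"] assms by simp

lemma scp_no_fakes:
  assumes "nonneg_bids b" "i < length b" "0 \<le> b'" "S \<subseteq> {..<length b}" "card S \<le> B"
  shows "rev_at mrev (b[i := b']) S + conf_at conf (b[i := b']) S i * b ! i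
           - pay_at pay (b[i := b']) S i
         \<le> mu inc mrev b + xx inc conf b i * b ! i - pp inc pay b i"
  using scp[unfolded SCP1_def Let_def, rule_format, of b i b' "[]" S] assms by simp

text \<open>The coalition of the miner and user i with value y bids z and includes honestly; compare
  with UIC for user i with value z.\<close>
lemma mu_diff_le:
  assumes b: "nonneg_bids b" "i < length b" and "0 \<le> y" "0 \<le> z"
  shows "mu inc mrev (b[i := z]) - mu inc mrev (b[i := y])
           \<le> (xx inc conf (b[i := y]) i - xx inc conf (b[i := z]) i) * (y - z)"
proof -
  let ?by = "b[i := y]" and ?bz = "b[i := z]"
  have nonneg: "nonneg_bids ?by" "nonneg_bids ?bz"
    using nonneg_bids_list_update b \<open>0 \<le> y\<close> \<open>0 \<le> z\<close> by auto
  have fin: "finite (set_pmf (inc ?bz))" using finite_set_pmf_inc[OF nonneg(2)] .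
  have "measure_pmf.expectation (inc ?bz)
      (\<lambda>S. rev_at mrev ?bz S + conf_at conf ?bz S i * y - pay_at pay ?bz S i)
      \<le> measure_pmf.expectation (inc ?bz)
      (\<lambda>_. mu inc mrev ?by + xx inc conf ?by i * y - pp inc pay ?by i)"
  proof (rule expectation_mono_pmf[OF fin])
    fix S assume "S \<in> set_pmf (inc ?bz)"
    then show "rev_at mrev ?bz S + conf_at conf ?bz S i * y - pay_at pay ?bz S i
        \<le> mu inc mrev ?by + xx inc conf ?by i * y - pp inc pay ?by i"
      using scp_no_fakes[OF nonneg(1) _ \<open>0 \<le> z\<close>, of i S] inc_support[OF nonneg(2)] b(2)
      by simp
  qed
  then have coalition: "mu inc mrev ?bz + xx inc conf ?bz i * y - pp inc pay ?bz i
      \<le> mu inc mrev ?by + xx inc conf ?by i * y - pp inc pay ?by i"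
    unfolding mu_def xx_def pp_def
    by (simp add: integrable_measure_pmf_finite[OF fin] integral_diff integral_add)
  have user: "xx inc conf ?by i * z - pp inc pay ?by i \<le> xx inc conf ?bz i * z - pp inc pay ?bz i"
    using uic_no_fakes[OF nonneg(2) _ \<open>0 \<le> y\<close>, of i] b(2) by simp
  have "(xx inc conf ?by i - xx inc conf ?bz i) * (y - z) = xx inc conf ?by i * y
      - xx inc conf ?bz i * y + xx inc conf ?bz i * z - xx inc conf ?by i * z"
    by (simp add: algebra_simps)
  then show ?thesis using coalition user by linarith
qed

lemma mu_update_zero:
  assumes b: "nonneg_bids b" "i < length b"
  shows "mu inc mrev b = mu inc mrev (b[i := 0])"
proof -
  have bi: "0 \<le> b ! i" using b unfolding nonneg_bids_def by simp
  have "mu inc mrev (b[i := b ! i]) = mu inc mrev (b[i := 0])"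
  proof (rule endpoints_eq_if_abs_diff_le_increment[where m = "\<lambda>t. mu inc mrev (b[i := t])"
        and X = "\<lambda>t. xx inc conf (b[i := t]) i"])
    fix s t :: real assume "s \<in> {0..b ! i}" "t \<in> {0..b ! i}"
    then show "\<bar>mu inc mrev (b[i := t]) - mu inc mrev (b[i := s])\<bar>
        \<le> (xx inc conf (b[i := t]) i - xx inc conf (b[i := s]) i) * (t - s)"
      using mu_diff_le[OF b, of s t] mu_diff_le[OF b, of t s] by (simp add: abs_le_iff algebra_simps)
  next
    fix t :: real assume "t \<in> {0..b ! i}"
    then show "0 \<le> xx inc conf (b[i := t]) i \<and> xx inc conf (b[i := t]) i \<le> 1"
      using xx_bounds nonneg_bids_list_update b(1) by simp
  qed (use bi in simp)
  then show ?thesis by simp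
qed

lemma mu_eq_0: "nonneg_bids b \<Longrightarrow> mu inc mrev b = 0"
proof (induction "card {k. k < length b \<and> b ! k \<noteq> 0}" arbitrary: b rule: less_induct)
  case (less b)
  show ?case
  proof (cases "\<forall>y\<in>set b. y = 0")
    case True
    then show ?thesis using mu_eq_0_if_bids_zero less.prems by blast
  next
    case False
    then obtain i where i: "i < length b" "b ! i \<noteq> 0" by (auto simp: in_set_conv_nth)
    have "{k. k < length (b[i := 0]) \<and> b[i := 0] ! k \<noteq> 0} = {k. k < length b \<and> b ! k \<noteq> 0} - {i}"
      using i(1) by (auto simp: nth_list_update)
    also have "card \<dots> < card {k. k < length b \<and> b ! k \<noteq> 0}"
      by (rule card_Diff1_less) (use i in auto)
    finally have "card {k. k < length (b[i := 0]) \<and> b[i := 0] ! k \<noteq> 0}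
        < card {k. k < length b \<and> b ! k \<noteq> 0}" .
    then have "mu inc mrev (b[i := 0]) = 0"
      using less.hyps nonneg_bids_list_update less.prems by simp
    then show ?thesis using mu_update_zero[OF less.prems i(1)] by simp
  qed
qed

lemma conf_le_div:
  assumes c: "nonneg_bids c" "length c \<le> B" "k < length c" and "0 < n"
  shows "conf c k \<le> real B * (sum_list c + 1) / real n"
proof -
  define V where "V = sum_list c + 1"
  have ck: "0 \<le> c ! k" "c ! k + 1 \<le> V"
    using c member_le_sum_list[of "c ! k" c] unfolding V_def nonneg_bids_def by auto
  define b where "b = c[k := V] @ replicate (n - 1) V"
  have "nonneg_bids (c[k := V])" using ck by (intro nonneg_bids_list_update[OF c(1)]) linarith
  then have nonneg: "nonneg_bids b" unfolding b_def using ck by (auto simp: nonneg_bids_def)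
  have k: "k < length b" "b ! k = V" unfolding b_def using c(3) by (auto simp: nth_append)
  have "real (card (insert k {length c..<length b})) * xx inc conf b k \<le> real B"
    using c(3) by (intro card_mult_xx_le[OF nonneg]) (auto simp: b_def nth_append)
  then have honest: "xx inc conf b k * V \<le> real B * V / real n"
    using c(3) \<open>0 < n\<close> ck by (simp add: b_def field_simps mult_right_mono)
  have deviation: "b[k := c ! k] = c @ replicate (n - 1) V"
    unfolding b_def using c(3) by (simp add: list_update_append1)
  have "{..<length c} \<subseteq> {..<length b}" unfolding b_def by auto
  from scp_no_fakes[OF nonneg k(1) ck(1) this] c(2)
  have "mrev c + conf c k * V - pay c k \<le> mu inc mrev b + xx inc conf b k * V - pp inc pay b k"
    unfolding deviation k(2)
    using c(3) by (simp add: rev_at_def conf_at_def pay_at_def incl_prefix pos_lessThan)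
  moreover have "conf c k \<le> conf c k * V - pay c k"
    using conf_pay_bounds[OF c] ck mult_left_mono[of "c ! k + 1" V "conf c k"]
    by (simp add: algebra_simps)
  ultimately have "conf c k \<le> real B * V / real n"
    using honest mu_eq_0[OF nonneg] pp_nonneg[OF nonneg, of k] conjunct1[OF mrev_bounds[OF c(1,2)]]
    by linarith
  then show ?thesis by (simp add: V_def)
qed

lemma conf_eq_0:
  assumes "nonneg_bids c" "length c \<le> B" "k < length c"
  shows "conf c k = 0"
  using nonpos_if_le_div_nat[OF conf_le_div[OF assms]] conf_pay_bounds[OF assms] by simp

lemma xx_eq_0:
  assumes b: "nonneg_bids b"
  shows "xx inc conf b i = 0"
  unfolding xx_def
proof (rule expectation_pmf_eq_0)
  fix S assume "S \<in> set_pmf (inc b)"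
  then have S: "S \<subseteq> {..<length b}" "card S \<le> B" using inc_support[OF b] by auto
  have "finite S" by (rule finite_subset[OF S(1)]) simp
  then show "conf_at conf b S i = 0"
    using conf_eq_0[OF nonneg_bids_incl[OF b S(1)]] S(2) pos_less_card
    by (simp add: conf_at_def)
qed

end

theorem mainTheorem2:
  fixes B :: nat
    and inc :: "real list \<Rightarrow> nat set pmf"
    and conf pay :: "real list \<Rightarrow> nat \<Rightarrow> real"
    and mrev :: "real list \<Rightarrow> real"
  assumes "valid_tfm B inc conf pay mrev"
    and "UIC inc conf pay"
    and "SCP1 B inc conf pay mrev"
  shows "\<forall>b. nonneg_bids b \<longrightarrow> (\<forall>i<length b. xx inc conf b i = 0) \<and> mu inc mrev b = 0"
proof -
  interpret tfm_uic_scp B inc conf pay mrev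
    using assms by (simp add: tfm_uic_scp_def tfm_def tfm_uic_scp_axioms_def)
  show ?thesis using xx_eq_0 mu_eq_0 by blast
qed

end
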